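(* Let $u$ be a parking sorted configuration on $K_{m,n}$ (with arbitrary value $u_{a_m}\in\mathbb Z$ at the sink). Then $$\mathrm{xpara}(u)=(m-1)(n-1)+\mathrm{rank}(u)-\mathrm{degree}(u)\qquad\text{and}\qquad \mathrm{ypara}(u)=\mathrm{rank}(u)+1.$$
   Context: Let $m,n\ge 1$. $K_{m,n}$ is the complete bipartite graph with vertex set $V=A_m\sqcup B_n$, $A_m=\{a_1,\dots,a_m\}$, $B_n=\{b_1,\dots,b_n\}$, with exactly one edge $\{a_i,b_j\}$ for every $i,j$; $a_m$ is the sink. A configuration is a function $u:V\to\mathbb Z$; $\mathrm{degree}(u)=\sum_c u_c$. For $c\in V$ with graph degree $d_c$, $\Delta^{(c)}=d_c e_c-\sum_{c'\text{ adjacent to }c}e_{c'}$, with $e_c$ the indicator configuration of $c$; $\Delta^{(C)}=\sum_{c\in C}\Delta^{(c)}$. Toppling equivalence: difference in the integer span of the $\Delta^{(c)}$. Effective: toppling equivalent to a non-negative configuration. $\mathrm{rank}(u)=-1+\min\{\mathrm{degree}(f): f\ge0,\ u-f\text{ not effective}\}$. $u$ is parking if $u_c\ge0$ for $c\ne a_m$ and for every non-empty $C\subseteq V\setminus\{a_m\}$, $u-\Delta^{(C)}$ has a negative value at a vertex other than $a_m$; sorted if $u_{a_1}\le\dots\le u_{a_{m-1}}$ and $u_{b_1}\le\dots\le u_{b_n}$. The $r$-vector of a parking sorted $u$ is $(r_1,\dots,r_n)$, $r_i=u_{b_i}+1-\#\{j\in\{1,\dots,m-1\}: u_{a_j}+1\le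 i-1\}$ (one has $-m+2\le r_i\le 1$). Labels: for $\sigma\in\mathbb Z$ write $\sigma=qn+t$ with $q,t\in\mathbb Z$, $0\le t<n$; call $\sigma$ right (for $u$) if $q+r_{t+1}\ge 1$ and left otherwise (in the paper, $\sigma$ labels a cell of the cylindric diagram, lying to the right resp. left of the red path). Define $\mathrm{xpara}(u)=\#\{\sigma\in\mathbb Z:\sigma>u_{a_m},\ \sigma\text{ left}\}$ (unvisited left cells) and $\mathrm{ypara}(u)=\#\{\sigma\in\mathbb Z:\sigma\le u_{a_m},\ \sigma\text{ right}\}$ (visited right cells); both are finite. *)

theory Defs
  imports Main
begin

text \<open>Vertices of K_{m,n}: A i (1 \<le> i \<le> m) and B j (1 \<le> j \<le> n). The sink is A m.
  Configurations are functions vert \<Rightarrow> int; only their values on the vertex set matter.\<close>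

datatype vert = A nat | B nat

definition verts :: "nat \<Rightarrow> nat \<Rightarrow> vert set" where
  "verts m n = A ` {1..m} \<union> B ` {1..n}"

definition adj :: "nat \<Rightarrow> nat \<Rightarrow> vert \<Rightarrow> vert \<Rightarrow> bool" where
  "adj m n x y \<longleftrightarrow>
     (\<exists>i\<in>{1..m}. \<exists>j\<in>{1..n}. (x = A i \<and> y = B j) \<or> (x = B j \<and> y = A i))"

definition gdeg :: "nat \<Rightarrow> nat \<Rightarrow> vert \<Rightarrow> int" where
  "gdeg m n c = int (card {c' \<in> verts m n. adj m n c c'})"

definition conf_degree :: "nat \<Rightarrow> nat \<Rightarrow> (vert \<Rightarrow> int) \<Rightarrow> int" where
  "conf_degree m n u = (\<Sum>c\<in>verts m n. u c)"

definition Delta :: "nat \<Rightarrow> nat \<Rightarrow> vert \<Rightarrow> vert \<Rightarrow> int" where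
  "Delta m n c = (\<lambda>x. (if x = c then gdeg m n c else 0) - (if adj m n c x then 1 else 0))"

definition DeltaSet :: "nat \<Rightarrow> nat \<Rightarrow> vert set \<Rightarrow> vert \<Rightarrow> int" where
  "DeltaSet m n C = (\<lambda>x. \<Sum>c\<in>C. Delta m n c x)"

definition toppling_equiv :: "nat \<Rightarrow> nat \<Rightarrow> (vert \<Rightarrow> int) \<Rightarrow> (vert \<Rightarrow> int) \<Rightarrow> bool" where
  "toppling_equiv m n u v \<longleftrightarrow>
     (\<exists>k :: vert \<Rightarrow> int. \<forall>x\<in>verts m n. u x - v x = (\<Sum>c\<in>verts m n. k c * Delta m n c x))"

definition effective :: "nat \<Rightarrow> nat \<Rightarrow> (vert \<Rightarrow> int) \<Rightarrow> bool" where
  "effective m n u \<longleftrightarrow>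
     (\<exists>f. (\<forall>x\<in>verts m n. f x \<ge> 0) \<and> toppling_equiv m n u f)"

definition conf_rank :: "nat \<Rightarrow> nat \<Rightarrow> (vert \<Rightarrow> int) \<Rightarrow> int" where
  "conf_rank m n u = -1 + int (LEAST d :: nat. \<exists>f. (\<forall>x\<in>verts m n. f x \<ge> 0)
       \<and> conf_degree m n f = int d \<and> \<not> effective m n (\<lambda>x. u x - f x))"

definition parking :: "nat \<Rightarrow> nat \<Rightarrow> (vert \<Rightarrow> int) \<Rightarrow> bool" where
  "parking m n u \<longleftrightarrow>
     (\<forall>c\<in>verts m n - {A m}. u c \<ge> 0) \<and>
     (\<forall>C. C \<noteq> {} \<longrightarrow> C \<subseteq> verts m n - {A m} \<longrightarrow>
        (\<exists>x\<in>verts m n - {A m}. u x - DeltaSet m n C x < 0))"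

definition sorted_conf :: "nat \<Rightarrow> nat \<Rightarrow> (vert \<Rightarrow> int) \<Rightarrow> bool" where
  "sorted_conf m n u \<longleftrightarrow>
     (\<forall>i j. 1 \<le> i \<longrightarrow> i \<le> j \<longrightarrow> j \<le> m - 1 \<longrightarrow> u (A i) \<le> u (A j)) \<and>
     (\<forall>i j. 1 \<le> i \<longrightarrow> i \<le> j \<longrightarrow> j \<le> n \<longrightarrow> u (B i) \<le> u (B j))"

text \<open>r-vector, indexed by i \<in> {1..n}.\<close>
definition rvec :: "nat \<Rightarrow> nat \<Rightarrow> (vert \<Rightarrow> int) \<Rightarrow> nat \<Rightarrow> int" where
  "rvec m n u i = u (B i) + 1 - int (card {j \<in> {1..m - 1}. u (A j) + 1 \<le> int i - 1})"

text \<open>sigma = q n + t with 0 \<le> t < n, i.e. q = sigma div n, t = sigma mod n.\<close>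
definition is_right :: "nat \<Rightarrow> nat \<Rightarrow> (vert \<Rightarrow> int) \<Rightarrow> int \<Rightarrow> bool" where
  "is_right m n u \<sigma> \<longleftrightarrow>
     \<sigma> div int n + rvec m n u (nat (\<sigma> mod int n) + 1) \<ge> 1"

definition xpara :: "nat \<Rightarrow> nat \<Rightarrow> (vert \<Rightarrow> int) \<Rightarrow> nat" where
  "xpara m n u = card {\<sigma> :: int. \<sigma> > u (A m) \<and> \<not> is_right m n u \<sigma>}"

definition ypara :: "nat \<Rightarrow> nat \<Rightarrow> (vert \<Rightarrow> int) \<Rightarrow> nat" where
  "ypara m n u = card {\<sigma> :: int. \<sigma> \<le> u (A m) \<and> is_right m n u \<sigma>}"

end

theory Submission
  imports Defs
begin

text \<open>Only the total numbers of firings a on A and b on B matter for effectiveness on K_{m,n}: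
  D is effective iff some pair satisfies a \<le> \<Sum>i. (D (A i) + b) div n and
  b \<le> \<Sum>j. (D (B j) + a) div m. Such pairs are invariant under (a, b) \<mapsto> (a + m, b + n), and
  rank D + 1 is the number of their orbits: removing a chip destroys at most one orbit, and while
  there is one, some chip on A destroys one. For a parking sorted u the orbit representatives with
  1 - n \<le> b \<le> 0 fill, column by column of the cylindric diagram, exactly as many cells as the
  visited right cells, so ypara u = rank u + 1. Comparing the columns of xpara and ypara and
  summing with Hermite's identity gives xpara u - ypara u = (m - 1)(n - 1) - 1 - degree u.\<close>

section \<open>Integer division and counting\<close>

lemma le_div_iff_mult_le:
  fixes k z n :: int
  assumes "0 < n"
  shows "k \<le> z div n \<longleftrightarrow> n * k \<le> z"
proof
  assume "k \<le> z div n"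
  then have "n * k \<le> n * (z div n)"
    using assms by simp
  also have "\<dots> \<le> z"
    using assms mult_div_mod_eq[of n z] pos_mod_sign[of n z] by linarith
  finally show "n * k \<le> z" .
next
  assume "n * k \<le> z"
  then have "(n * k) div n \<le> z div n"
    using assms by (rule zdiv_mono1)
  then show "k \<le> z div n"
    using assms by simp
qed

lemma pred_div_eq:
  fixes z n :: int
  assumes "0 < n"
  shows "(z - 1) div n = z div n - (if n dvd z then 1 else 0)"
proof (cases "n dvd z")
  case True
  then obtain q where q: "z = n * q" ..
  then have "z - 1 = n * (q - 1) + (n - 1)"
    by (simp add: algebra_simps)
  then have "(z - 1) div n = q - 1"
    by (rule int_div_pos_eq) (use assms in auto)
  then show ?thesis
    using True q assms by simp
next
  case False
  have "0 \<le> z mod n" "z mod n < n"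
    using assms by simp_all
  with False have "0 < z mod n"
    by (auto simp: dvd_eq_mod_eq_0)
  have "z - 1 = n * (z div n) + (z mod n - 1)"
    using mult_div_mod_eq[of n z] by linarith
  then have "(z - 1) div n = z div n"
    by (rule int_div_pos_eq) (use \<open>0 < z mod n\<close> \<open>z mod n < n\<close> in auto)
  then show ?thesis
    using False by simp
qed

lemma diff_div_eq_if:
  fixes x y n :: int
  assumes "0 \<le> x" "x < n" "0 \<le> y" "y \<le> n"
  shows "(x - y) div n = (if x < y then -1 else 0)"
proof (cases "x < y")
  case True
  have "x - y = n * (-1) + (x - y + n)"
    by simp
  then have "(x - y) div n = -1"
    by (rule int_div_pos_eq) (use assms True in auto)
  then show ?thesis
    using True by simp
next
  case False
  then show ?thesis
    using assms by (simp add: div_pos_pos_trivial)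
qed

lemma sum_if_const_eq_card:
  "finite S \<Longrightarrow> (\<Sum>x\<in>S. if P x then c else 0) = of_nat (card {x \<in> S. P x}) * c"
  by (simp add: sum.inter_filter[symmetric])

lemma sum_fun_upd:
  fixes f :: "'a \<Rightarrow> 'b::ab_group_add"
  assumes "finite S" "x \<in> S"
  shows "sum (f(x := y)) S = sum f S - f x + y"
proof -
  have "sum (f(x := y)) S = y + sum f (S - {x})"
    using assms by (simp add: sum.remove)
  also have "\<dots> = sum f S - f x + y"
    using assms by (simp add: sum.remove algebra_simps)
  finally show ?thesis .
qed

lemma card_greater_lessThan:
  fixes x :: int
  assumes "0 \<le> x" "x < int n"
  shows "int (card {t. t < n \<and> x < int t}) = int n - 1 - x"
proof -
  have "{t. t < n \<and> x < int t} = {nat x + 1..<n}"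
    using assms by auto
  then show ?thesis
    using assms by (simp add: of_nat_diff)
qed

lemma mult_add_le_iff_le_div:
  assumes "n \<ge> 1"
  shows "int n * q + int t \<le> s \<longleftrightarrow> q \<le> (s - int t) div int n"
  using assms by (simp add: le_div_iff_mult_le le_diff_eq)

lemma mult_add_mod_eq:
  "t < n \<Longrightarrow> (int n * q + int t) mod int n = int t"
  by (rule int_mod_pos_eq) simp_all

lemma card_int_by_residue:
  assumes n: "n \<ge> 1" and fin: "\<And>t. t < n \<Longrightarrow> finite {q. P (int n * q + int t)}"
  shows "card {\<sigma> :: int. P \<sigma>} = (\<Sum>t<n. card {q. P (int n * q + int t)})"
proof -
  let ?col = "\<lambda>t. (\<lambda>q. int n * q + int t) ` {q. P (int n * q + int t)}"
  have "{\<sigma>. P \<sigma>} = (\<Union>t<n. ?col t)"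
  proof (intro equalityI subsetI)
    fix \<sigma> assume "\<sigma> \<in> {\<sigma>. P \<sigma>}"
    moreover define t where "t = nat (\<sigma> mod int n)"
    moreover have "t < n" "\<sigma> = int n * (\<sigma> div int n) + int t"
      using n by (simp_all add: t_def nat_less_iff)
    ultimately show "\<sigma> \<in> (\<Union>t<n. ?col t)"
      by (intro UN_I[of t] image_eqI[of _ _ "\<sigma> div int n"]) auto
  qed auto
  moreover have "?col t \<inter> ?col t' = {}" if "t < n" "t' < n" "t \<noteq> t'" for t t'
  proof -
    have "x mod int n = int s" if "s < n" "x \<in> ?col s" for x s
      using that mult_add_mod_eq by auto
    then show ?thesis
      using that by (metis disjoint_iff of_nat_eq_iff)
  qed
  moreover have "card (?col t) = card {q. P (int n * q + int t)}" for t
    using n by (intro card_image) (simp add: inj_on_def)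
  ultimately show ?thesis
    using fin by (simp add: card_UN_disjoint)
qed

lemma sum_diff_div_eq:
  fixes s :: int
  assumes "n \<ge> 1"
  shows "(\<Sum>t<n. (s - int t) div int n) = s - int n + 1"
proof -
  define q r where "q = s div int n" and "r = s mod int n"
  have r: "0 \<le> r" "r < int n"
    using assms by (simp_all add: r_def)
  have s: "s = r + q * int n"
    by (simp add: q_def r_def)
  have "(s - int t) div int n = q + (if r < int t then -1 else 0)" if "t < n" for t
  proof -
    have "s - int t = (r - int t) + q * int n"
      using s by simp
    then have "(s - int t) div int n = q + (r - int t) div int n"
      using assms by (metis div_mult_self1 of_nat_0_eq_iff not_one_le_zero)
    then show ?thesis
      using assms r that diff_div_eq_if[of r "int n" "int t"] by simp
  qed
  then have "(\<Sum>t<n. (s - int t) div int n) = (\<Sum>t<n. q + (if r < int t then -1 else 0))"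
    by (intro sum.cong) auto
  also have "\<dots> = int n * q - int (card {t. t < n \<and> r < int t})"
    by (simp add: sum.distrib sum_if_const_eq_card)
  also have "\<dots> = s - int n + 1"
    using card_greater_lessThan[OF r] s by (simp add: algebra_simps)
  finally show ?thesis .
qed

section \<open>The Laplacian of K_{m,n}\<close>

lemma finite_verts [simp]: "finite (verts m n)"
  by (simp add: verts_def)

lemma A_in_verts [simp]: "A i \<in> verts m n \<longleftrightarrow> i \<in> {1..m}"
  by (auto simp: verts_def)

lemma B_in_verts [simp]: "B j \<in> verts m n \<longleftrightarrow> j \<in> {1..n}"
  by (auto simp: verts_def)

lemma sum_verts: "sum g (verts m n) = (\<Sum>i=1..m. g (A i)) + (\<Sum>j=1..n. g (B j))"
proof -
  have "sum g (verts m n) = sum g (A ` {1..m}) + sum g (B ` {1..n})"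
    unfolding verts_def by (rule sum.union_disjoint) auto
  then show ?thesis
    by (simp add: sum.reindex inj_on_def)
qed

lemma gdeg_A: "i \<in> {1..m} \<Longrightarrow> gdeg m n (A i) = int n"
proof -
  assume "i \<in> {1..m}"
  then have "{c \<in> verts m n. adj m n (A i) c} = B ` {1..n}"
    by (auto simp: verts_def adj_def)
  then show ?thesis
    by (simp add: gdeg_def card_image inj_on_def)
qed

lemma gdeg_B: "j \<in> {1..n} \<Longrightarrow> gdeg m n (B j) = int m"
proof -
  assume "j \<in> {1..n}"
  then have "{c \<in> verts m n. adj m n (B j) c} = A ` {1..m}"
    by (auto simp: verts_def adj_def)
  then show ?thesis
    by (simp add: gdeg_def card_image inj_on_def)
qed

lemma laplacian_at_A:
  assumes "i \<in> {1..m}"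
  shows "(\<Sum>c\<in>verts m n. k c * Delta m n c (A i)) = int n * k (A i) - (\<Sum>j=1..n. k (B j))"
proof -
  have "(\<Sum>i'=1..m. k (A i') * Delta m n (A i') (A i))
      = (\<Sum>i'=1..m. if i' = i then int n * k (A i) else 0)"
    by (rule sum.cong) (use assms in \<open>auto simp: Delta_def adj_def gdeg_A\<close>)
  moreover have "(\<Sum>j=1..n. k (B j) * Delta m n (B j) (A i)) = (\<Sum>j=1..n. - k (B j))"
    by (rule sum.cong) (use assms in \<open>auto simp: Delta_def adj_def\<close>)
  ultimately show ?thesis
    using assms by (simp add: sum_verts sum_negf)
qed

lemma laplacian_at_B:
  assumes "j \<in> {1..n}"
  shows "(\<Sum>c\<in>verts m n. k c * Delta m n c (B j)) = int m * k (B j) - (\<Sum>i=1..m. k (A i))"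
proof -
  have "(\<Sum>j'=1..n. k (B j') * Delta m n (B j') (B j))
      = (\<Sum>j'=1..n. if j' = j then int m * k (B j) else 0)"
    by (rule sum.cong) (use assms in \<open>auto simp: Delta_def adj_def gdeg_B\<close>)
  moreover have "(\<Sum>i=1..m. k (A i) * Delta m n (A i) (B j)) = (\<Sum>i=1..m. - k (A i))"
    by (rule sum.cong) (use assms in \<open>auto simp: Delta_def adj_def\<close>)
  ultimately show ?thesis
    using assms by (simp add: sum_verts sum_negf)
qed

section \<open>Effectiveness via total firing numbers\<close>

text \<open>If the vertices of B fire b times in total, vertex A i can fire at most
  (D (A i) + b) div n times without becoming negative, and symmetrically for B j.\<close>

definition max_firings_A :: "nat \<Rightarrow> nat \<Rightarrow> (vert \<Rightarrow> int) \<Rightarrow> int \<Rightarrow> int" where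
  "max_firings_A m n D b = (\<Sum>i=1..m. (D (A i) + b) div int n)"

definition max_firings_B :: "nat \<Rightarrow> nat \<Rightarrow> (vert \<Rightarrow> int) \<Rightarrow> int \<Rightarrow> int" where
  "max_firings_B m n D a = (\<Sum>j=1..n. (D (B j) + a) div int m)"

definition firing_pairs :: "nat \<Rightarrow> nat \<Rightarrow> (vert \<Rightarrow> int) \<Rightarrow> (int \<times> int) set" where
  "firing_pairs m n D = {(a, b). a \<le> max_firings_A m n D b \<and> b \<le> max_firings_B m n D a}"

lemma effective_iff_firing_pairs:
  assumes m: "m \<ge> 1" and n: "n \<ge> 1"
  shows "effective m n D \<longleftrightarrow> firing_pairs m n D \<noteq> {}"
proof
  assume "effective m n D"
  then obtain f k where f: "\<forall>x\<in>verts m n. f x \<ge> 0"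
    and k: "\<forall>x\<in>verts m n. D x - f x = (\<Sum>c\<in>verts m n. k c * Delta m n c x)"
    unfolding effective_def toppling_equiv_def by blast
  define a where "a = (\<Sum>i=1..m. k (A i))"
  define b where "b = (\<Sum>j=1..n. k (B j))"
  have "k (A i) \<le> (D (A i) + b) div int n" if i: "i \<in> {1..m}" for i
  proof -
    have "D (A i) - f (A i) = int n * k (A i) - b" "f (A i) \<ge> 0"
      using i f k laplacian_at_A[OF i] by (simp_all add: b_def)
    then show ?thesis
      using n by (simp add: le_div_iff_mult_le)
  qed
  then have "a \<le> max_firings_A m n D b"
    unfolding a_def max_firings_A_def by (rule sum_mono)
  moreover have "k (B j) \<le> (D (B j) + a) div int m" if j: "j \<in> {1..n}" for j
  proof -
    have "D (B j) - f (B j) = int m * k (B j) - a" "f (B j) \<ge> 0"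
      using j f k laplacian_at_B[OF j] by (simp_all add: a_def)
    then show ?thesis
      using m by (simp add: le_div_iff_mult_le)
  qed
  then have "b \<le> max_firings_B m n D a"
    unfolding b_def max_firings_B_def by (rule sum_mono)
  ultimately show "firing_pairs m n D \<noteq> {}"
    by (auto simp: firing_pairs_def)
next
  assume "firing_pairs m n D \<noteq> {}"
  then obtain a b where a: "a \<le> max_firings_A m n D b" and b: "b \<le> max_firings_B m n D a"
    by (auto simp: firing_pairs_def)
  \<comment> \<open>Fire every vertex maximally; A 1 and B 1 give up the slack so that the totals are a and b.\<close>
  define k where "k v = (case v of
      A i \<Rightarrow> (D (A i) + b) div int n - (if i = 1 then max_firings_A m n D b - a else 0)
    | B j \<Rightarrow> (D (B j) + a) div int m - (if j = 1 then max_firings_B m n D a - b else 0))" for v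
  have sum_A: "(\<Sum>i=1..m. k (A i)) = a"
    using m by (simp add: k_def sum_subtractf max_firings_A_def)
  have sum_B: "(\<Sum>j=1..n. k (B j)) = b"
    using n by (simp add: k_def sum_subtractf max_firings_B_def)
  have "0 \<le> D x - (\<Sum>c\<in>verts m n. k c * Delta m n c x)" if "x \<in> verts m n" for x
  proof -
    from that consider i where "i \<in> {1..m}" "x = A i" | j where "j \<in> {1..n}" "x = B j"
      by (auto simp: verts_def)
    then show ?thesis
    proof cases
      case (1 i)
      have "k (A i) \<le> (D (A i) + b) div int n"
        using a by (simp add: k_def)
      then show ?thesis
        using 1 n laplacian_at_A[OF 1(1), where n = n and k = k] sum_B by (simp add: le_div_iff_mult_le)
    next
      case (2 j)
      have "k (B j) \<le> (D (B j) + a) div int m"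
        using b by (simp add: k_def)
      then show ?thesis
        using 2 m laplacian_at_B[OF 2(1), where m = m and k = k] sum_A by (simp add: le_div_iff_mult_le)
    qed
  qed
  then show "effective m n D"
    unfolding effective_def toppling_equiv_def
    by (intro exI[of _ "\<lambda>x. D x - (\<Sum>c\<in>verts m n. k c * Delta m n c x)"] conjI exI[of _ k]) auto
qed

lemma max_firings_A_shift:
  "n \<ge> 1 \<Longrightarrow> max_firings_A m n D (b + k * int n) = max_firings_A m n D b + k * int m"
  by (simp add: max_firings_A_def add.assoc[symmetric] sum.distrib)

lemma max_firings_B_shift:
  "m \<ge> 1 \<Longrightarrow> max_firings_B m n D (a + k * int m) = max_firings_B m n D a + k * int n"
  by (simp add: max_firings_B_def add.assoc[symmetric] sum.distrib)

lemma firing_pairs_shift: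
  assumes "m \<ge> 1" "n \<ge> 1"
  shows "(a + k * int m, b + k * int n) \<in> firing_pairs m n D \<longleftrightarrow> (a, b) \<in> firing_pairs m n D"
  using assms by (simp add: firing_pairs_def max_firings_A_shift max_firings_B_shift)

lemma max_firings_A_mono: "b \<le> b' \<Longrightarrow> max_firings_A m n D b \<le> max_firings_A m n D b'"
  unfolding max_firings_A_def by (cases "n = 0") (auto intro!: sum_mono zdiv_mono1)

lemma max_firings_B_mono: "a \<le> a' \<Longrightarrow> max_firings_B m n D a \<le> max_firings_B m n D a'"
  unfolding max_firings_B_def by (cases "m = 0") (auto intro!: sum_mono zdiv_mono1)

lemma firing_pairs_mono:
  assumes "m \<ge> 1" "n \<ge> 1" "\<forall>x\<in>verts m n. D' x \<le> D x"
  shows "firing_pairs m n D' \<subseteq> firing_pairs m n D"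
proof -
  have "max_firings_A m n D' b \<le> max_firings_A m n D b" for b
    unfolding max_firings_A_def using assms by (intro sum_mono zdiv_mono1) auto
  moreover have "max_firings_B m n D' a \<le> max_firings_B m n D a" for a
    unfolding max_firings_B_def using assms by (intro sum_mono zdiv_mono1) auto
  ultimately show ?thesis
    unfolding firing_pairs_def by (auto intro: order_trans)
qed

text \<open>Firing every vertex once fixes every configuration and shifts (a, b) by (m, n), so it
  suffices to count one representative per shift orbit: the one with 1 - n \<le> b \<le> 0.\<close>

definition reduced_pairs :: "nat \<Rightarrow> nat \<Rightarrow> (vert \<Rightarrow> int) \<Rightarrow> (int \<times> int) set" where
  "reduced_pairs m n D = {(a, b) \<in> firing_pairs m n D. 1 - int n \<le> b \<and> b \<le> 0}"

lemma shift_into_window: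
  assumes "n \<ge> 1"
  obtains k where "1 - int n \<le> b + k * int n" "b + k * int n \<le> 0"
proof
  define q where "q = (b + int n - 1) div int n"
  have "b + int n - 1 = int n * q + (b + int n - 1) mod int n"
    by (simp add: q_def)
  moreover have "0 \<le> (b + int n - 1) mod int n" "(b + int n - 1) mod int n < int n"
    using assms by simp_all
  ultimately show "1 - int n \<le> b + (- q) * int n" "b + (- q) * int n \<le> 0"
    by (simp_all add: algebra_simps)
qed

lemma window_shift_eq_zero:
  fixes b k :: int
  assumes "1 - int n \<le> b" "b \<le> 0" "1 - int n \<le> b + k * int n" "b + k * int n \<le> 0"
  shows "k = 0"
proof (rule ccontr)
  assume "k \<noteq> 0"
  then have "1 \<le> \<bar>k\<bar>"
    by linarith
  then have "int n \<le> \<bar>k * int n\<bar>"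
    using mult_right_mono[of 1 "\<bar>k\<bar>" "int n"] by (simp add: abs_mult)
  then show False
    using assms by linarith
qed

lemma firing_pair_shift_reduced:
  assumes "m \<ge> 1" "n \<ge> 1" "(a, b) \<in> firing_pairs m n D"
  obtains k where "(a + k * int m, b + k * int n) \<in> reduced_pairs m n D"
proof -
  obtain k where "1 - int n \<le> b + k * int n" "b + k * int n \<le> 0"
    using shift_into_window assms(2) by blast
  with that show ?thesis
    using assms by (simp add: reduced_pairs_def firing_pairs_shift)
qed

lemma effective_iff_reduced_pairs:
  assumes "m \<ge> 1" "n \<ge> 1"
  shows "effective m n D \<longleftrightarrow> reduced_pairs m n D \<noteq> {}"
proof
  assume "effective m n D"
  then obtain a b where "(a, b) \<in> firing_pairs m n D"
    using effective_iff_firing_pairs[OF assms] by auto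
  then show "reduced_pairs m n D \<noteq> {}"
    using firing_pair_shift_reduced[OF assms] by blast
qed (auto simp: effective_iff_firing_pairs[OF assms] reduced_pairs_def)

lemma finite_reduced_pairs:
  assumes "m \<ge> 1" "n \<ge> 1"
  shows "finite (reduced_pairs m n D)"
proof -
  define L where "L = - (\<Sum>j=1..n. \<bar>D (B j)\<bar>)"
  have "L \<le> a" if "(a, b) \<in> reduced_pairs m n D" for a b
  proof (rule ccontr)
    assume "\<not> L \<le> a"
    have "(D (B j) + a) div int m \<le> -1" if "j \<in> {1..n}" for j
    proof -
      have "\<bar>D (B j)\<bar> \<le> (\<Sum>j=1..n. \<bar>D (B j)\<bar>)"
        using that by (intro member_le_sum) auto
      then have "D (B j) + a < 0"
        using \<open>\<not> L \<le> a\<close> by (simp add: L_def)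
      then show ?thesis
        using assms div_neg_pos_less0[of "D (B j) + a" "int m"] by linarith
    qed
    then have "max_firings_B m n D a \<le> - int n"
      using sum_mono[of "{1..n}" "\<lambda>j. (D (B j) + a) div int m" "\<lambda>_. -1"]
      by (simp add: max_firings_B_def)
    then show False
      using that by (auto simp: reduced_pairs_def firing_pairs_def)
  qed
  moreover have "a \<le> max_firings_A m n D 0" if "(a, b) \<in> reduced_pairs m n D" for a b
    using that max_firings_A_mono[of b 0 m n D] by (auto simp: reduced_pairs_def firing_pairs_def)
  ultimately have "reduced_pairs m n D \<subseteq> {L..max_firings_A m n D 0} \<times> {1 - int n..0}"
    by (auto simp: reduced_pairs_def)
  then show ?thesis
    by (rule finite_subset) auto
qed

lemma reduced_pairs_mono:
  "m \<ge> 1 \<Longrightarrow> n \<ge> 1 \<Longrightarrow> \<forall>x\<in>verts m n. D' x \<le> D x \<Longrightarrow> reduced_pairs m n D' \<subseteq> reduced_pairs m n D"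
  using firing_pairs_mono[of m n D' D] by (auto simp: reduced_pairs_def)

section \<open>The rank counts reduced firing pairs\<close>

definition remove_chip :: "(vert \<Rightarrow> int) \<Rightarrow> vert \<Rightarrow> vert \<Rightarrow> int" where
  "remove_chip D v = D(v := D v - 1)"

lemma max_firings_A_pred:
  assumes "n \<ge> 1"
  shows "max_firings_A m n D (b - 1)
           = max_firings_A m n D b - int (card {i \<in> {1..m}. int n dvd D (A i) + b})"
proof -
  have "max_firings_A m n D (b - 1)
      = (\<Sum>i=1..m. (D (A i) + b) div int n - (if int n dvd D (A i) + b then 1 else 0))"
    unfolding max_firings_A_def using assms pred_div_eq[of "int n"]
    by (intro sum.cong) (simp_all add: algebra_simps)
  then show ?thesis
    by (simp add: sum_subtractf sum_if_const_eq_card max_firings_A_def)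
qed

lemma max_firings_A_remove_chip_A:
  assumes "n \<ge> 1" "i \<in> {1..m}"
  shows "max_firings_A m n (remove_chip D (A i)) b
           = max_firings_A m n D b - (if int n dvd D (A i) + b then 1 else 0)"
proof -
  have "(remove_chip D (A i) (A i') + b) div int n
      = (D (A i') + b) div int n - (if i' = i \<and> int n dvd D (A i) + b then 1 else 0)" for i'
  proof (cases "i' = i")
    case True
    then show ?thesis
      using assms pred_div_eq[of "int n" "D (A i) + b"] by (simp add: remove_chip_def algebra_simps)
  qed (simp add: remove_chip_def)
  then have "max_firings_A m n (remove_chip D (A i)) b
      = (\<Sum>i'=1..m. (D (A i') + b) div int n - (if i' = i \<and> int n dvd D (A i) + b then 1 else 0))"
    by (simp add: max_firings_A_def)
  then show ?thesis
    using assms by (simp add: sum_subtractf max_firings_A_def)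
qed

lemma max_firings_B_remove_chip_B:
  assumes "m \<ge> 1" "j \<in> {1..n}"
  shows "max_firings_B m n (remove_chip D (B j)) a
           = max_firings_B m n D a - (if int m dvd D (B j) + a then 1 else 0)"
proof -
  have "(remove_chip D (B j) (B j') + a) div int m
      = (D (B j') + a) div int m - (if j' = j \<and> int m dvd D (B j) + a then 1 else 0)" for j'
  proof (cases "j' = j")
    case True
    then show ?thesis
      using assms pred_div_eq[of "int m" "D (B j) + a"] by (simp add: remove_chip_def algebra_simps)
  qed (simp add: remove_chip_def)
  then have "max_firings_B m n (remove_chip D (B j)) a
      = (\<Sum>j'=1..n. (D (B j') + a) div int m - (if j' = j \<and> int m dvd D (B j) + a then 1 else 0))"
    by (simp add: max_firings_B_def)
  then show ?thesis
    using assms by (simp add: sum_subtractf max_firings_B_def)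
qed

lemma max_firings_B_remove_chip_A: "max_firings_B m n (remove_chip D (A i)) = max_firings_B m n D"
  by (simp add: fun_eq_iff max_firings_B_def remove_chip_def)

lemma max_firings_A_remove_chip_B: "max_firings_A m n (remove_chip D (B j)) = max_firings_A m n D"
  by (simp add: fun_eq_iff max_firings_A_def remove_chip_def)

lemma firing_pair_lost_remove_chip_A:
  assumes "n \<ge> 1" "i \<in> {1..m}"
    and "(a, b) \<in> firing_pairs m n D" "(a, b) \<notin> firing_pairs m n (remove_chip D (A i))"
  shows "a = max_firings_A m n D b \<and> int n dvd D (A i) + b"
  using assms
  by (auto simp: firing_pairs_def max_firings_A_remove_chip_A max_firings_B_remove_chip_A
      split: if_splits)

lemma firing_pair_lost_remove_chip_B:
  assumes "m \<ge> 1" "j \<in> {1..n}"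
    and "(a, b) \<in> firing_pairs m n D" "(a, b) \<notin> firing_pairs m n (remove_chip D (B j))"
  shows "b = max_firings_B m n D a \<and> int m dvd D (B j) + a"
  using assms
  by (auto simp: firing_pairs_def max_firings_B_remove_chip_B max_firings_A_remove_chip_B
      split: if_splits)

text \<open>The reduced pairs lost by removing a chip are shifts of each other, hence equal.\<close>

lemma card_reduced_pairs_le_remove_chip:
  assumes m: "m \<ge> 1" and n: "n \<ge> 1" and v: "v \<in> verts m n"
  shows "card (reduced_pairs m n D) \<le> card (reduced_pairs m n (remove_chip D v)) + 1"
proof -
  let ?R = "reduced_pairs m n D" and ?R' = "reduced_pairs m n (remove_chip D v)"
  have lost_eq: "(a, b) = (a', b')" if p: "(a, b) \<in> ?R - ?R'" and q: "(a', b') \<in> ?R - ?R'"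
    for a b a' b'
  proof -
    have pq: "(a, b) \<in> firing_pairs m n D" "(a, b) \<notin> firing_pairs m n (remove_chip D v)"
      "(a', b') \<in> firing_pairs m n D" "(a', b') \<notin> firing_pairs m n (remove_chip D v)"
      using p q by (auto simp: reduced_pairs_def)
    obtain k where k: "a' = a + k * int m" "b' = b + k * int n"
    proof -
      from v consider i where "i \<in> {1..m}" "v = A i" | j where "j \<in> {1..n}" "v = B j"
        by (auto simp: verts_def)
      then show thesis
      proof cases
        case (1 i)
        have "a = max_firings_A m n D b" "a' = max_firings_A m n D b'"
          "int n dvd D (A i) + b" "int n dvd D (A i) + b'"
          using firing_pair_lost_remove_chip_A[OF n 1(1)] pq 1(2) by blast+
        moreover have "int n dvd b' - b"
          using dvd_diff[OF calculation(4,3)] by simp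
        then obtain k where "b' - b = int n * k" ..
        ultimately show thesis
          using that[of k] max_firings_A_shift[OF n, of m D b k] by (simp add: algebra_simps)
      next
        case (2 j)
        have "b = max_firings_B m n D a" "b' = max_firings_B m n D a'"
          "int m dvd D (B j) + a" "int m dvd D (B j) + a'"
          using firing_pair_lost_remove_chip_B[OF m 2(1)] pq 2(2) by blast+
        moreover have "int m dvd a' - a"
          using dvd_diff[OF calculation(4,3)] by simp
        then obtain k where "a' - a = int m * k" ..
        ultimately show thesis
          using that[of k] max_firings_B_shift[OF m, of n D a k] by (simp add: algebra_simps)
      qed
    qed
    have "k = 0"
      using window_shift_eq_zero[of n b k] p q k by (auto simp: reduced_pairs_def)
    then show ?thesis
      using k by simp
  qed
  have fin: "finite ?R" "finite ?R'"
    using finite_reduced_pairs[OF m n] by blast+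
  then have "card (?R - ?R') \<le> 1"
    using lost_eq by (auto simp: card_le_Suc0_iff_eq)
  moreover have "card ?R \<le> card ?R' + card (?R - ?R')"
    using fin card_Un_le[of ?R' "?R - ?R'"] card_mono[of "?R' \<union> (?R - ?R')" ?R] by auto
  ultimately show ?thesis
    by linarith
qed

text \<open>A firing pair maximising n a - m b (bounded above by the chips on A) can neither
  increase a nor decrease b.\<close>

lemma exists_tight_firing_pair:
  assumes m: "m \<ge> 1" and n: "n \<ge> 1" and ne: "firing_pairs m n D \<noteq> {}"
  obtains a b where "(a, b) \<in> firing_pairs m n D" "a = max_firings_A m n D b"
    "max_firings_A m n D (b - 1) < max_firings_A m n D b"
proof -
  define val where "val p = int n * fst p - int m * snd p" for p :: "int \<times> int"
  define X where "X = (\<Sum>i=1..m. D (A i))"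
  have val_le: "val (a, b) \<le> X" if "(a, b) \<in> firing_pairs m n D" for a b
  proof -
    have "int n * a \<le> int n * max_firings_A m n D b"
      using that by (simp add: firing_pairs_def mult_left_mono)
    also have "\<dots> = (\<Sum>i=1..m. int n * ((D (A i) + b) div int n))"
      by (simp add: max_firings_A_def sum_distrib_left)
    also have "\<dots> \<le> (\<Sum>i=1..m. D (A i) + b)"
      using n by (intro sum_mono) (simp add: le_div_iff_mult_le[symmetric])
    also have "\<dots> = X + int m * b"
      by (simp add: X_def sum.distrib)
    finally show ?thesis
      by (simp add: val_def)
  qed
  obtain p0 where "p0 \<in> firing_pairs m n D"
    using ne by blast
  then obtain p where p: "p \<in> firing_pairs m n D"
    and p_min: "\<And>q. q \<in> firing_pairs m n D \<Longrightarrow> nat (X - val p) \<le> nat (X - val q)"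
    using ex_has_least_nat[of "\<lambda>p. p \<in> firing_pairs m n D" p0 "\<lambda>p. nat (X - val p)"] by blast
  obtain a b where ab: "p = (a, b)"
    by fastforce
  have p_max: "val q \<le> val (a, b)" if "q \<in> firing_pairs m n D" for q
    using p_min[OF that] val_le that p ab by (cases q) fastforce
  have pair: "a \<le> max_firings_A m n D b" "b \<le> max_firings_B m n D a"
    using p ab by (auto simp: firing_pairs_def)
  have "a = max_firings_A m n D b"
  proof (rule ccontr)
    assume "a \<noteq> max_firings_A m n D b"
    then have "(a + 1, b) \<in> firing_pairs m n D"
      using pair max_firings_B_mono[of a "a + 1" m n D] by (auto simp: firing_pairs_def)
    then show False
      using p_max[of "(a + 1, b)"] n by (simp add: val_def)
  qed
  moreover have "max_firings_A m n D (b - 1) < max_firings_A m n D b"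
  proof (rule ccontr)
    assume "\<not> ?thesis"
    then have "(a, b - 1) \<in> firing_pairs m n D"
      using pair \<open>a = max_firings_A m n D b\<close> by (auto simp: firing_pairs_def)
    then show False
      using p_max[of "(a, b - 1)"] m by (simp add: val_def)
  qed
  ultimately show thesis
    using that p ab by blast
qed

lemma exists_chip_A_shrinking_reduced_pairs:
  assumes m: "m \<ge> 1" and n: "n \<ge> 1" and "effective m n D"
  obtains i where "i \<in> {1..m}" "reduced_pairs m n (remove_chip D (A i)) \<subset> reduced_pairs m n D"
proof -
  obtain a b where ab: "(a, b) \<in> firing_pairs m n D" "a = max_firings_A m n D b"
    "max_firings_A m n D (b - 1) < max_firings_A m n D b"
    using exists_tight_firing_pair[OF m n] assms(3) effective_iff_firing_pairs[OF m n] by blast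
  then have "0 < card {i \<in> {1..m}. int n dvd D (A i) + b}"
    using max_firings_A_pred[OF n, of m D b] by linarith
  then obtain i where i: "i \<in> {1..m}" "int n dvd D (A i) + b"
    by (auto simp: card_gt_0_iff)
  have lost: "(a, b) \<notin> firing_pairs m n (remove_chip D (A i))"
    using ab i by (simp add: firing_pairs_def max_firings_A_remove_chip_A[OF n])
  obtain k where k: "(a + k * int m, b + k * int n) \<in> reduced_pairs m n D"
    using firing_pair_shift_reduced[OF m n ab(1)] by blast
  then have "(a + k * int m, b + k * int n) \<notin> reduced_pairs m n (remove_chip D (A i))"
    using lost firing_pairs_shift[OF m n] by (auto simp: reduced_pairs_def)
  moreover have "reduced_pairs m n (remove_chip D (A i)) \<subseteq> reduced_pairs m n D"
    by (rule reduced_pairs_mono[OF m n]) (simp add: remove_chip_def)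
  ultimately show thesis
    using that i k by blast
qed

lemma card_reduced_pairs_le_diff:
  assumes m: "m \<ge> 1" and n: "n \<ge> 1"
    and "\<forall>x\<in>verts m n. 0 \<le> f x" "conf_degree m n f = int d"
  shows "card (reduced_pairs m n D) \<le> card (reduced_pairs m n (\<lambda>x. D x - f x)) + d"
  using assms(3,4)
proof (induction d arbitrary: f)
  case 0
  then have "\<forall>x\<in>verts m n. f x = 0"
    using sum_nonneg_eq_0_iff[of "verts m n" f] by (simp add: conf_degree_def)
  then have "reduced_pairs m n (\<lambda>x. D x - f x) = reduced_pairs m n D"
    using reduced_pairs_mono[OF m n] by (intro equalityI) simp_all
  then show ?case
    by simp
next
  case (Suc d)
  have "\<not> (\<forall>x\<in>verts m n. f x = 0)"
  proof
    assume "\<forall>x\<in>verts m n. f x = 0"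
    then have "conf_degree m n f = 0"
      by (simp add: conf_degree_def)
    then show False
      using Suc.prems(2) by simp
  qed
  then obtain v where v: "v \<in> verts m n" "0 < f v"
    using Suc.prems(1) by force
  define f' where "f' = f(v := f v - 1)"
  have "conf_degree m n f' = conf_degree m n f - 1"
    unfolding f'_def conf_degree_def using v(1) by (subst sum_fun_upd) auto
  then have "\<forall>x\<in>verts m n. 0 \<le> f' x" "conf_degree m n f' = int d"
    using Suc.prems v by (auto simp: f'_def)
  then have "card (reduced_pairs m n D) \<le> card (reduced_pairs m n (\<lambda>x. D x - f' x)) + d"
    by (rule Suc.IH)
  moreover have "(\<lambda>x. D x - f x) = remove_chip (\<lambda>x. D x - f' x) v"
    by (auto simp: remove_chip_def f'_def)
  ultimately show ?case
    using card_reduced_pairs_le_remove_chip[OF m n v(1), of "\<lambda>x. D x - f' x"] by simp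
qed

lemma exists_noneffective_removal:
  assumes m: "m \<ge> 1" and n: "n \<ge> 1"
  shows "\<exists>f. (\<forall>x\<in>verts m n. 0 \<le> f x) \<and> conf_degree m n f = int (card (reduced_pairs m n D))
           \<and> \<not> effective m n (\<lambda>x. D x - f x)"
proof (induction "card (reduced_pairs m n D)" arbitrary: D)
  case 0
  then have "\<not> effective m n (\<lambda>x. D x - 0)"
    using finite_reduced_pairs[OF m n] effective_iff_reduced_pairs[OF m n] by simp
  then show ?case
    by (intro exI[of _ "\<lambda>_. 0"]) (simp add: conf_degree_def flip: 0)
next
  case (Suc k)
  then have "effective m n D"
    using effective_iff_reduced_pairs[OF m n] by force
  then obtain i where i: "i \<in> {1..m}"
    and shrink: "reduced_pairs m n (remove_chip D (A i)) \<subset> reduced_pairs m n D"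
    using exists_chip_A_shrinking_reduced_pairs[OF m n] by blast
  have "card (reduced_pairs m n (remove_chip D (A i))) < card (reduced_pairs m n D)"
    using shrink finite_reduced_pairs[OF m n] by (rule psubset_card_mono[rotated])
  then have "k = card (reduced_pairs m n (remove_chip D (A i)))"
    using Suc.hyps(2) card_reduced_pairs_le_remove_chip[OF m n, of "A i" D] i by simp
  then obtain f where f: "\<forall>x\<in>verts m n. 0 \<le> f x" "conf_degree m n f = int k"
    "\<not> effective m n (\<lambda>x. remove_chip D (A i) x - f x)"
    using Suc.hyps(1) by blast
  define g where "g = f(A i := f (A i) + 1)"
  have "conf_degree m n g = conf_degree m n f + 1"
    unfolding g_def conf_degree_def using i by (subst sum_fun_upd) auto
  then have "\<forall>x\<in>verts m n. 0 \<le> g x" "conf_degree m n g = int (Suc k)"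
    using f by (auto simp: g_def)
  moreover have "(\<lambda>x. D x - g x) = (\<lambda>x. remove_chip D (A i) x - f x)"
    by (auto simp: g_def remove_chip_def)
  ultimately show ?case
    using f(3) Suc.hyps(2) by metis
qed

lemma conf_rank_eq_card_reduced_pairs:
  assumes m: "m \<ge> 1" and n: "n \<ge> 1"
  shows "conf_rank m n D = int (card (reduced_pairs m n D)) - 1"
proof -
  have "(LEAST d. \<exists>f. (\<forall>x\<in>verts m n. f x \<ge> 0) \<and> conf_degree m n f = int d
          \<and> \<not> effective m n (\<lambda>x. D x - f x)) = card (reduced_pairs m n D)"
  proof (rule Least_equality)
    fix d
    assume "\<exists>f. (\<forall>x\<in>verts m n. f x \<ge> 0) \<and> conf_degree m n f = int d
              \<and> \<not> effective m n (\<lambda>x. D x - f x)"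
    then obtain f where f: "\<forall>x\<in>verts m n. f x \<ge> 0" "conf_degree m n f = int d"
      "\<not> effective m n (\<lambda>x. D x - f x)"
      by blast
    then have "reduced_pairs m n (\<lambda>x. D x - f x) = {}"
      using effective_iff_reduced_pairs[OF m n] by blast
    then show "card (reduced_pairs m n D) \<le> d"
      using card_reduced_pairs_le_diff[OF m n f(1,2), of D] by simp
  qed (use exists_noneffective_removal[OF m n] in auto)
  then show ?thesis
    by (simp add: conf_rank_def)
qed

section \<open>Parking sorted configurations\<close>

lemma parking_lt_gdeg:
  assumes u: "parking m n u" and v: "v \<in> verts m n - {A m}"
  shows "0 \<le> u v \<and> u v < gdeg m n v"
proof -
  have nonneg: "\<forall>x\<in>verts m n - {A m}. 0 \<le> u x"
    using u by (simp add: parking_def)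
  obtain x where x: "x \<in> verts m n - {A m}" "u x - DeltaSet m n {v} x < 0"
    using u v unfolding parking_def by (metis empty_not_insert empty_subsetI insert_subset)
  have "x = v"
  proof (rule ccontr)
    assume "x \<noteq> v"
    then have "DeltaSet m n {v} x \<le> 0"
      by (simp add: DeltaSet_def Delta_def)
    then show False
      using x nonneg by force
  qed
  moreover have "\<not> adj m n v v"
    by (auto simp: adj_def)
  ultimately show ?thesis
    using x v nonneg by (simp add: DeltaSet_def Delta_def)
qed

lemma parking_bounds_A:
  assumes "parking m n u" "j \<in> {1..m - 1}"
  shows "0 \<le> u (A j) \<and> u (A j) < int n"
proof -
  have "A j \<in> verts m n - {A m}" and j: "j \<in> {1..m}"
    using assms(2) by auto
  then show ?thesis
    using parking_lt_gdeg[OF assms(1), of "A j"] by (simp add: gdeg_A[OF j])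
qed

lemma parking_bounds_B:
  assumes "parking m n u" "j \<in> {1..n}"
  shows "0 \<le> u (B j) \<and> u (B j) < int m"
proof -
  have "B j \<in> verts m n - {A m}"
    using assms(2) by auto
  then show ?thesis
    using parking_lt_gdeg[OF assms(1), of "B j"] by (simp add: gdeg_B[OF assms(2)])
qed

definition count_A_below :: "nat \<Rightarrow> (vert \<Rightarrow> int) \<Rightarrow> int \<Rightarrow> nat" where
  "count_A_below m u t = card {j \<in> {1..m - 1}. u (A j) < t}"

lemma rvec_Suc: "rvec m n u (Suc t) = u (B (Suc t)) + 1 - int (count_A_below m u (int t))"
proof -
  have "{j \<in> {1..m - 1}. u (A j) + 1 \<le> int (t + 1) - 1} = {j \<in> {1..m - 1}. u (A j) < int t}"
    by auto
  then show ?thesis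
    by (simp add: rvec_def count_A_below_def)
qed

text \<open>Column t of the cylindric diagram holds the labels n q + t; such a label is visited iff
  q \<le> (u (A m) - t) div n and lies right of the path iff q \<ge> 1 - r_(t+1).\<close>

definition column_gap :: "nat \<Rightarrow> nat \<Rightarrow> (vert \<Rightarrow> int) \<Rightarrow> nat \<Rightarrow> int" where
  "column_gap m n u t = (u (A m) - int t) div int n + rvec m n u (t + 1)"

lemma is_right_column:
  "t < n \<Longrightarrow> is_right m n u (int n * q + int t) \<longleftrightarrow> 1 - rvec m n u (t + 1) \<le> q"
  by (auto simp: is_right_def int_div_pos_eq int_mod_pos_eq)

lemma ypara_eq_sum_column_gap:
  assumes "n \<ge> 1"
  shows "ypara m n u = (\<Sum>t<n. nat (column_gap m n u t))" (is "_ = ?rhs")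
proof -
  have col: "{q. int n * q + int t \<le> u (A m) \<and> is_right m n u (int n * q + int t)}
      = {1 - rvec m n u (t + 1) .. (u (A m) - int t) div int n}" if "t < n" for t
    using that assms by (auto simp: is_right_column mult_add_le_iff_le_div)
  have "ypara m n u
      = (\<Sum>t<n. card {q. int n * q + int t \<le> u (A m) \<and> is_right m n u (int n * q + int t)})"
    unfolding ypara_def using assms by (rule card_int_by_residue) (simp add: col)
  also have "\<dots> = ?rhs"
    by (rule sum.cong) (simp_all add: col column_gap_def)
  finally show ?thesis .
qed

lemma xpara_eq_sum_column_gap:
  assumes "n \<ge> 1"
  shows "xpara m n u = (\<Sum>t<n. nat (- column_gap m n u t))" (is "_ = ?rhs")
proof -
  have col: "{q. u (A m) < int n * q + int t \<and> \<not> is_right m n u (int n * q + int t)}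
      = {(u (A m) - int t) div int n + 1 .. - rvec m n u (t + 1)}" if "t < n" for t
    using that assms by (auto simp: is_right_column mult_add_le_iff_le_div not_le[symmetric])
  have "xpara m n u
      = (\<Sum>t<n. card {q. u (A m) < int n * q + int t \<and> \<not> is_right m n u (int n * q + int t)})"
    unfolding xpara_def using assms by (rule card_int_by_residue) (simp add: col)
  also have "\<dots> = ?rhs"
    by (rule sum.cong) (simp_all add: col column_gap_def)
  finally show ?thesis .
qed

lemma card_reduced_pairs_by_column:
  assumes m: "m \<ge> 1" and n: "n \<ge> 1"
  shows "card (reduced_pairs m n D) = (\<Sum>t<n. card {a. (a, - int t) \<in> firing_pairs m n D})"
proof -
  let ?col = "\<lambda>t. (\<lambda>a. (a, - int t)) ` {a. (a, - int t) \<in> firing_pairs m n D}"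
  have "reduced_pairs m n D = (\<Union>t<n. ?col t)"
  proof (intro equalityI subsetI)
    fix p assume p: "p \<in> reduced_pairs m n D"
    then obtain a b where ab: "p = (a, b)" "1 - int n \<le> b" "b \<le> 0"
      by (auto simp: reduced_pairs_def)
    then have "nat (- b) < n" "b = - int (nat (- b))"
      by auto
    with p ab show "p \<in> (\<Union>t<n. ?col t)"
      by (intro UN_I[of "nat (- b)"]) (auto simp: reduced_pairs_def)
  qed (auto simp: reduced_pairs_def)
  moreover have "finite (?col t)" if "t < n" for t
    using that calculation by (intro rev_finite_subset[OF finite_reduced_pairs[OF m n]]) blast
  moreover have "?col t \<inter> ?col t' = {}" if "t \<noteq> t'" for t t'
    using that by auto
  moreover have "card (?col t) = card {a. (a, - int t) \<in> firing_pairs m n D}" for t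
    by (intro card_image) (simp add: inj_on_def)
  ultimately show ?thesis
    by (simp add: card_UN_disjoint)
qed

lemma max_firings_A_column:
  assumes m: "m \<ge> 1" and t: "t < n"
    and bounds: "\<And>j. j \<in> {1..m - 1} \<Longrightarrow> 0 \<le> u (A j) \<and> u (A j) < int n"
  shows "max_firings_A m n u (- int t)
           = (u (A m) - int t) div int n - int (count_A_below m u (int t))"
proof -
  have "{1..m} = insert m {1..m - 1}"
    using m by auto
  then have "max_firings_A m n u (- int t)
      = (u (A m) - int t) div int n + (\<Sum>j=1..m - 1. (u (A j) - int t) div int n)"
    using m by (simp add: max_firings_A_def)
  also have "(\<Sum>j=1..m - 1. (u (A j) - int t) div int n)
      = (\<Sum>j=1..m - 1. if u (A j) < int t then -1 else 0)"
    using bounds t by (intro sum.cong) (simp_all add: diff_div_eq_if)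
  also have "\<dots> = - int (count_A_below m u (int t))"
    by (simp add: sum_if_const_eq_card count_A_below_def)
  finally show ?thesis
    by simp
qed

lemma max_firings_B_at_neg:
  assumes "0 \<le> y" "y \<le> int m"
    and bounds: "\<And>j. j \<in> {1..n} \<Longrightarrow> 0 \<le> u (B j) \<and> u (B j) < int m"
  shows "max_firings_B m n u (- y) = - int (card {j \<in> {1..n}. u (B j) < y})"
proof -
  have "max_firings_B m n u (- y) = (\<Sum>j=1..n. if u (B j) < y then -1 else 0)"
    unfolding max_firings_B_def using assms by (intro sum.cong) (simp_all add: diff_div_eq_if)
  then show ?thesis
    by (simp add: sum_if_const_eq_card)
qed

lemma max_firings_B_column_iff:
  assumes t: "t < n"
    and bounds: "\<And>j. j \<in> {1..n} \<Longrightarrow> 0 \<le> u (B j) \<and> u (B j) < int m"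
    and sorted: "\<And>i j. 1 \<le> i \<Longrightarrow> i \<le> j \<Longrightarrow> j \<le> n \<Longrightarrow> u (B i) \<le> u (B j)"
  shows "- int t \<le> max_firings_B m n u a \<longleftrightarrow> - u (B (t + 1)) \<le> a"
proof -
  define y where "y = u (B (t + 1))"
  have y: "0 \<le> y" "y < int m"
    using bounds t by (simp_all add: y_def)
  have "{j \<in> {1..n}. u (B j) < y} \<subseteq> {1..t}"
  proof (intro subsetI)
    fix j assume "j \<in> {j \<in> {1..n}. u (B j) < y}"
    then have "\<not> t + 1 \<le> j" "1 \<le> j"
      using sorted[of "t + 1" j] by (auto simp: y_def)
    then show "j \<in> {1..t}"
      by simp
  qed
  then have "card {j \<in> {1..n}. u (B j) < y} \<le> t"
    using card_mono[of "{1..t}"] by fastforce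
  then have low: "- int t \<le> max_firings_B m n u (- y)"
    using max_firings_B_at_neg[of y m n u] y bounds by simp
  have "{1..t + 1} \<subseteq> {j \<in> {1..n}. u (B j) < y + 1}"
    using sorted[of _ "t + 1"] t by (force simp: y_def)
  then have "t + 1 \<le> card {j \<in> {1..n}. u (B j) < y + 1}"
    using card_mono[of "{j \<in> {1..n}. u (B j) < y + 1}" "{1..t + 1}"] by simp
  then have high: "max_firings_B m n u (- (y + 1)) \<le> - int (t + 1)"
    using max_firings_B_at_neg[of "y + 1" m n u] y bounds by simp
  show ?thesis
  proof
    assume "- int t \<le> max_firings_B m n u a"
    then show "- u (B (t + 1)) \<le> a"
      using high max_firings_B_mono[of a "- (y + 1)" m n u] by (force simp: y_def)
  next
    assume "- u (B (t + 1)) \<le> a"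
    then show "- int t \<le> max_firings_B m n u a"
      using low max_firings_B_mono[of "- y" a m n u] by (simp add: y_def)
  qed
qed

lemma card_reduced_pairs_eq_ypara:
  assumes m: "m \<ge> 1" and n: "n \<ge> 1" and u: "parking m n u" "sorted_conf m n u"
  shows "card (reduced_pairs m n u) = ypara m n u"
proof -
  have sorted: "\<And>i j. 1 \<le> i \<Longrightarrow> i \<le> j \<Longrightarrow> j \<le> n \<Longrightarrow> u (B i) \<le> u (B j)"
    using u(2) by (simp add: sorted_conf_def)
  have "{a. (a, - int t) \<in> firing_pairs m n u}
      = {- u (B (t + 1)) .. (u (A m) - int t) div int n - int (count_A_below m u (int t))}"
    if t: "t < n" for t
  proof -
    have colA: "max_firings_A m n u (- int t)
        = (u (A m) - int t) div int n - int (count_A_below m u (int t))"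
      using parking_bounds_A[OF u(1)] by (rule max_firings_A_column[OF m t])
    have colB: "- int t \<le> max_firings_B m n u a \<longleftrightarrow> - u (B (t + 1)) \<le> a" for a
      using parking_bounds_B[OF u(1)] sorted by (rule max_firings_B_column_iff[OF t])
    show ?thesis
      unfolding firing_pairs_def set_eq_iff mem_Collect_eq case_prod_conv atLeastAtMost_iff colA colB
      by blast
  qed
  then have "card {a. (a, - int t) \<in> firing_pairs m n u} = nat (column_gap m n u t)"
    if "t < n" for t
    using that by (simp add: column_gap_def rvec_Suc algebra_simps)
  then show ?thesis
    using card_reduced_pairs_by_column[OF m n] ypara_eq_sum_column_gap[OF n] by simp
qed

lemma xpara_sub_ypara:
  assumes "n \<ge> 1"
  shows "int (xpara m n u) - int (ypara m n u) = - (\<Sum>t<n. column_gap m n u t)"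
proof -
  have "int (xpara m n u) - int (ypara m n u)
      = (\<Sum>t<n. int (nat (- column_gap m n u t)) - int (nat (column_gap m n u t)))"
    using assms by (simp add: xpara_eq_sum_column_gap ypara_eq_sum_column_gap sum_subtractf)
  also have "\<dots> = (\<Sum>t<n. - column_gap m n u t)"
    by (rule sum.cong) auto
  finally show ?thesis
    by (simp add: sum_negf)
qed

lemma sum_count_A_below:
  assumes m: "m \<ge> 1"
    and bounds: "\<And>j. j \<in> {1..m - 1} \<Longrightarrow> 0 \<le> u (A j) \<and> u (A j) < int n"
  shows "(\<Sum>t<n. int (count_A_below m u (int t)))
           = (int m - 1) * (int n - 1) - (\<Sum>j=1..m - 1. u (A j))"
proof -
  have "(\<Sum>t<n. int (count_A_below m u (int t)))
      = (\<Sum>t<n. \<Sum>j=1..m - 1. if u (A j) < int t then 1 else 0)"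
    by (simp add: count_A_below_def sum_if_const_eq_card)
  also have "\<dots> = (\<Sum>j=1..m - 1. \<Sum>t<n. if u (A j) < int t then 1 else 0)"
    by (rule sum.swap)
  also have "\<dots> = (\<Sum>j=1..m - 1. int n - 1 - u (A j))"
    using bounds by (intro sum.cong) (simp_all add: sum_if_const_eq_card card_greater_lessThan)
  also have "\<dots> = (int m - 1) * (int n - 1) - (\<Sum>j=1..m - 1. u (A j))"
    using m by (simp add: sum_subtractf of_nat_diff)
  finally show ?thesis .
qed

lemma sum_column_gap:
  assumes m: "m \<ge> 1" and n: "n \<ge> 1"
    and bounds: "\<And>j. j \<in> {1..m - 1} \<Longrightarrow> 0 \<le> u (A j) \<and> u (A j) < int n"
  shows "(\<Sum>t<n. column_gap m n u t) = conf_degree m n u - (int m - 1) * (int n - 1) + 1"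
proof -
  have "{1..m} = insert m {1..m - 1}"
    using m by auto
  then have deg: "conf_degree m n u = u (A m) + (\<Sum>j=1..m - 1. u (A j)) + (\<Sum>j=1..n. u (B j))"
    using m by (simp add: conf_degree_def sum_verts)
  have "(\<Sum>t<n. u (B (t + 1))) = (\<Sum>j=1..n. u (B j))"
    using sum.atLeast1_atMost_eq[of "\<lambda>j. u (B j)" n] by simp
  then have "(\<Sum>t<n. column_gap m n u t) = (\<Sum>t<n. (u (A m) - int t) div int n)
      + (\<Sum>j=1..n. u (B j)) + int n - (\<Sum>t<n. int (count_A_below m u (int t)))"
    by (simp add: column_gap_def rvec_Suc sum.distrib sum_subtractf)
  then show ?thesis
    using sum_diff_div_eq[OF n] sum_count_A_below[of m u n, OF m bounds] deg by simp
qed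

theorem lemma13p1:
  fixes m n :: nat and u :: "vert \<Rightarrow> int"
  assumes "m \<ge> 1" and "n \<ge> 1"
    and "parking m n u" and "sorted_conf m n u"
  shows "int (xpara m n u) = (int m - 1) * (int n - 1) + conf_rank m n u - conf_degree m n u
         \<and> int (ypara m n u) = conf_rank m n u + 1"
proof -
  have "int (ypara m n u) = conf_rank m n u + 1"
    using conf_rank_eq_card_reduced_pairs[OF assms(1,2)] card_reduced_pairs_eq_ypara[OF assms]
    by simp
  moreover have "int (xpara m n u) - int (ypara m n u)
      = (int m - 1) * (int n - 1) - conf_degree m n u - 1"
    using xpara_sub_ypara[OF assms(2)] sum_column_gap[OF assms(1,2)] parking_bounds_A[OF assms(3)]
    by simp
  ultimately show ?thesis
    by simp
qed

end
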